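(* Let $p\ge 1$, $\sigma>0$, and let $H:\mathcal{H}\times\mathcal{X}^n\to\mathbb{R}$ be such that for every $h\in\mathcal{H}$ the random variable $H(h,\mathbf{X})$, $\mathbf{X}\sim\mu^n$, is $\sigma$-subgaussian. Let $Z(\mathbf{x})=\int_{\mathcal{H}}e^{H(h,\mathbf{x})}d\pi(h)$ (assumed finite and positive, with $\int_{\mathcal{H}}e^{\mathbb{E}[H(h,\mathbf{X})]}d\pi(h)$ finite and positive). Then: (i) $\ln\mathbb{E}\left[e^{p\left(-\ln Z(\mathbf{X})+\mathbb{E}[\ln Z(\mathbf{X}')]\right)}\right]\le p^2\sigma^2$. (ii) If $f:\mathcal{X}^n\to\mathbb{R}$ is such that $f(\mathbf{X})$ is $\rho$-subgaussian, then $$\ln\mathbb{E}\left[e^{p\left(f(\mathbf{X})-\mathbb{E}[f(\mathbf{X}')]-\ln Z(\mathbf{X})+\mathbb{E}[\ln Z(\mathbf{X}')]\right)}\right]\le p^2(\rho+\sigma)^2.$$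
   Context: $\mathcal{X}$ is a measurable space with probability measure $\mu$; $\mathbf{X}\sim\mu^n$ and $\mathbf{X}'$ is an independent copy. $\mathcal{H}$ is a measurable space with nonnegative measure $\pi$; $H$ is jointly measurable. A real random variable $Y$ is $\sigma$-subgaussian if $\mathbb{E}[e^{\lambda(Y-\mathbb{E}[Y])}]\le e^{\lambda^2\sigma^2/2}$ for every $\lambda\in\mathbb{R}$. All expectations appearing are assumed finite. *)

theory Defs
  imports "HOL-Probability.Probability"
begin

definition subgaussian :: "'a measure \<Rightarrow> ('a \<Rightarrow> real) \<Rightarrow> real \<Rightarrow> bool" where
  "subgaussian P Y \<sigma> \<longleftrightarrow>
     integrable P Y \<and>
     (\<forall>l::real. integrable P (\<lambda>x. exp (l * (Y x - integral\<^sup>L P Y))) \<and>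
        integral\<^sup>L P (\<lambda>x. exp (l * (Y x - integral\<^sup>L P Y))) \<le> exp (l\<^sup>2 * \<sigma>\<^sup>2 / 2))"

text \<open>The n-fold product measure mu^n on X^n, with X^n represented as nat \<Rightarrow> 'x
  (coordinates 0..n-1, extensional).\<close>
abbreviation prod_sample :: "nat \<Rightarrow> 'x measure \<Rightarrow> (nat \<Rightarrow> 'x) measure" where
  "prod_sample n \<mu> \<equiv> PiM {..<n} (\<lambda>_. \<mu>)"

definition partZ :: "'h measure \<Rightarrow> ('h \<Rightarrow> 'b \<Rightarrow> real) \<Rightarrow> 'b \<Rightarrow> real" where
  "partZ \<pi> H x = (\<integral>h. exp (H h x) \<partial>\<pi>)"

end

theory Submission
  imports Defs
begin

text \<open>Write \<open>W = \<integral> exp (E H(h,X)) d\<pi>(h)\<close>. By Fubini and subgaussianity of each \<open>H(h,X)\<close>,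
  \<open>E \<integral> exp (E H(h,X) + \<lambda> (H(h,X) - E H(h,X))) d\<pi>(h) \<le> exp (\<lambda>\<^sup>2\<sigma>\<^sup>2/2) W\<close>.
  For \<open>\<lambda> = 1\<close> this bounds \<open>E Z\<close>, so Jensen gives \<open>E ln Z \<le> ln W + \<sigma>\<^sup>2/2\<close>. For \<open>\<lambda> = -s\<close>, Jensen
  for \<open>y \<mapsto> y\<^sup>-\<^sup>s\<close> under the probability measure \<open>exp (E H) \<pi> / W\<close> bounds \<open>E (Z/W)\<^sup>-\<^sup>s\<close> by
  \<open>exp (s\<^sup>2\<sigma>\<^sup>2/2)\<close>. Together, \<open>E exp (s (E ln Z - ln Z)) \<le> exp (s\<sigma>\<^sup>2/2 + s\<^sup>2\<sigma>\<^sup>2/2)\<close>, which is (i)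
  since \<open>p \<ge> 1\<close>. For (ii), Hoelder's inequality with exponents \<open>(\<rho>+\<sigma>)/\<rho>\<close> and \<open>(\<rho>+\<sigma>)/\<sigma>\<close> combines
  this with the subgaussian bound for \<open>f\<close>; the case \<open>\<rho> = 0\<close>, where this split degenerates,
  follows by letting the subgaussian constant decrease to \<open>\<rho>\<close>.\<close>

lemma exp_neg_mult_ge_tangent:
  fixes s v :: real
  assumes "s \<ge> 0"
  shows "1 + s - s * exp v \<le> exp (- s * v)"
proof -
  have "s * (v + 1) \<le> s * exp v"
    using assms exp_ge_add_one_self[of v] by (intro mult_left_mono) linarith+
  moreover have "1 + (- s * v) \<le> exp (- s * v)" by (rule exp_ge_add_one_self)
  ultimately show ?thesis by (simp add: algebra_simps)
qed

lemma nn_integral_exp_add_const: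
  assumes [measurable]: "f \<in> borel_measurable M"
  shows "(\<integral>\<^sup>+x. ennreal (exp (f x + c)) \<partial>M) = ennreal (exp c) * (\<integral>\<^sup>+x. ennreal (exp (f x)) \<partial>M)"
proof -
  have "(\<integral>\<^sup>+x. ennreal (exp (f x + c)) \<partial>M) = (\<integral>\<^sup>+x. ennreal (exp c) * ennreal (exp (f x)) \<partial>M)"
    by (simp add: exp_add mult.commute ennreal_mult)
  also have "\<dots> = ennreal (exp c) * (\<integral>\<^sup>+x. ennreal (exp (f x)) \<partial>M)"
    by (rule nn_integral_cmult) measurable
  finally show ?thesis .
qed

lemma nn_integral_exp_add_le_Hoelder:
  fixes F G :: "'a \<Rightarrow> real" and t A B :: real
  assumes [measurable]: "F \<in> borel_measurable M" "G \<in> borel_measurable M"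
    and t: "0 < t" "t < 1"
    and F: "(\<integral>\<^sup>+x. ennreal (exp (F x / t)) \<partial>M) \<le> ennreal (exp A)"
    and G: "(\<integral>\<^sup>+x. ennreal (exp (G x / (1 - t))) \<partial>M) \<le> ennreal (exp B)"
  shows "(\<integral>\<^sup>+x. ennreal (exp (F x + G x)) \<partial>M) \<le> ennreal (exp (t * A + (1 - t) * B))"
proof -
  define C where "C = t * A + (1 - t) * B"
  define a where "a x = F x / t - A" for x
  define b where "b x = G x / (1 - t) - B" for x
  have [measurable]: "a \<in> borel_measurable M" "b \<in> borel_measurable M"
    unfolding a_def[abs_def] b_def[abs_def] by simp_all
  have a: "(\<integral>\<^sup>+x. ennreal (exp (a x)) \<partial>M) \<le> 1"
    using mult_left_mono[OF F, of "ennreal (exp (- A))"]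
    unfolding a_def diff_conv_add_uminus
    by (subst nn_integral_exp_add_const) (simp_all flip: ennreal_mult exp_add)
  have b: "(\<integral>\<^sup>+x. ennreal (exp (b x)) \<partial>M) \<le> 1"
    using mult_left_mono[OF G, of "ennreal (exp (- B))"]
    unfolding b_def diff_conv_add_uminus
    by (subst nn_integral_exp_add_const) (simp_all flip: ennreal_mult exp_add)
  have "(\<integral>\<^sup>+x. ennreal (exp (F x + G x)) \<partial>M)
      \<le> (\<integral>\<^sup>+x. ennreal (exp C) * (ennreal t * ennreal (exp (a x))
                                   + ennreal (1 - t) * ennreal (exp (b x))) \<partial>M)"
  proof (intro nn_integral_mono)
    fix x
    have "F x + G x = C + ((1 - t) * b x + t * a x)"
      using t by (simp add: C_def a_def b_def field_simps)
    moreover have "exp ((1 - t) *\<^sub>R b x + t *\<^sub>R a x) \<le> (1 - t) * exp (b x) + t * exp (a x)"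
      using convex_onD[OF exp_convex, of t "b x" "a x"] t by simp
    ultimately have "exp (F x + G x) \<le> exp C * (t * exp (a x) + (1 - t) * exp (b x))"
      by (simp add: exp_add)
    then show "ennreal (exp (F x + G x))
        \<le> ennreal (exp C) * (ennreal t * ennreal (exp (a x)) + ennreal (1 - t) * ennreal (exp (b x)))"
      using t by (simp add: ennreal_leI flip: ennreal_mult ennreal_plus)
  qed
  also have "\<dots> = ennreal (exp C) * (ennreal t * (\<integral>\<^sup>+x. ennreal (exp (a x)) \<partial>M)
                 + ennreal (1 - t) * (\<integral>\<^sup>+x. ennreal (exp (b x)) \<partial>M))"
    by (simp add: nn_integral_add nn_integral_cmult distrib_left)
  also have "\<dots> \<le> ennreal (exp C) * (ennreal t * 1 + ennreal (1 - t) * 1)"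
    by (intro mult_left_mono add_mono a b) auto
  also have "\<dots> = ennreal (exp C)" using t by (simp flip: ennreal_plus)
  finally show ?thesis unfolding C_def .
qed

lemma ln_integral_le_of_nn_integral_le:
  fixes g :: "'a \<Rightarrow> real"
  assumes "integrable M g" and pos: "\<And>x. x \<in> space M \<Longrightarrow> g x > 0"
    and le: "(\<integral>\<^sup>+x. ennreal (g x) \<partial>M) \<le> ennreal (exp B)" and "B \<ge> 0" \<comment> \<open>for \<open>ln 0 = 0\<close>\<close>
  shows "ln (\<integral>x. g x \<partial>M) \<le> B"
proof -
  have "ennreal (\<integral>x. g x \<partial>M) = (\<integral>\<^sup>+x. ennreal (g x) \<partial>M)"
    using assms by (intro nn_integral_eq_integral[symmetric]) (auto intro: less_imp_le)
  then have "(\<integral>x. g x \<partial>M) \<le> exp B" using le by (metis ennreal_le_iff exp_ge_zero)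
  moreover have "(\<integral>x. g x \<partial>M) \<ge> 0" using pos by (intro integral_nonneg_AE AE_I2) (auto intro: less_imp_le)
  ultimately show ?thesis
    using \<open>B \<ge> 0\<close> by (smt (verit) exp_gt_zero ln_exp ln_le_cancel_iff ln_0)
qed

lemma sigma_finite_measure_if_integrable_pos:
  fixes g :: "'a \<Rightarrow> real"
  assumes g: "integrable M g" and pos: "\<And>x. x \<in> space M \<Longrightarrow> g x > 0"
  shows "sigma_finite_measure M"
proof
  note [measurable] = borel_measurable_integrable[OF g]
  define A where "A k = {x \<in> space M. g x \<ge> 1 / real (Suc k)}" for k
  have "emeasure M (A k) \<le> real (Suc k) * (\<integral>x. g x \<partial>M)" for k
    using integral_Markov_inequality[OF g, of "1 / real (Suc k)"] pos by (auto simp: A_def less_imp_le)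
  then have "emeasure M (A k) \<noteq> \<infinity>" for k
    using neq_top_trans[OF ennreal_neq_top] by force
  moreover have "(\<Union>k. A k) = space M"
  proof (intro antisym subsetI)
    fix x assume x: "x \<in> space M"
    obtain k where "1 / real (Suc k) < g x"
      using reals_Archimedean[OF pos[OF x]] by (auto simp: inverse_eq_divide)
    then show "x \<in> (\<Union>k. A k)" using x by (auto simp: A_def intro: less_imp_le)
  qed (auto simp: A_def)
  moreover have "A k \<in> sets M" for k unfolding A_def by measurable
  ultimately show "\<exists>A. countable A \<and> A \<subseteq> sets M \<and> \<Union> A = space M \<and> (\<forall>a\<in>A. emeasure M a \<noteq> \<infinity>)"
    by (intro exI[of _ "range A"]) auto
qed

lemma subgaussian_mono:
  assumes "subgaussian M Y \<rho>" and "\<bar>\<rho>\<bar> \<le> \<bar>\<rho>'\<bar>"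
  shows "subgaussian M Y \<rho>'"
proof -
  have "\<rho>\<^sup>2 \<le> \<rho>'\<^sup>2" using assms(2) by (simp add: abs_le_square_iff)
  then have "exp (l\<^sup>2 * \<rho>\<^sup>2 / 2) \<le> exp (l\<^sup>2 * \<rho>'\<^sup>2 / 2)" for l :: real
    by (simp add: mult_left_mono)
  then show ?thesis using assms(1) unfolding subgaussian_def by (blast intro: order_trans)
qed

lemma subgaussian_nn_integral_exp_le:
  assumes "subgaussian M Y \<sigma>"
  shows "(\<integral>\<^sup>+x. ennreal (exp (c + l * (Y x - integral\<^sup>L M Y))) \<partial>M) \<le> ennreal (exp (c + l\<^sup>2 * \<sigma>\<^sup>2 / 2))"
proof -
  from assms have int: "integrable M (\<lambda>x. exp (l * (Y x - integral\<^sup>L M Y)))"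
    and le: "(\<integral>x. exp (l * (Y x - integral\<^sup>L M Y)) \<partial>M) \<le> exp (l\<^sup>2 * \<sigma>\<^sup>2 / 2)"
    unfolding subgaussian_def by auto
  have "(\<integral>\<^sup>+x. ennreal (exp (c + l * (Y x - integral\<^sup>L M Y))) \<partial>M)
      = ennreal (exp c * (\<integral>x. exp (l * (Y x - integral\<^sup>L M Y)) \<partial>M))"
    using int by (subst nn_integral_eq_integral) (auto simp: exp_add)
  also have "\<dots> \<le> ennreal (exp (c + l\<^sup>2 * \<sigma>\<^sup>2 / 2))"
    using le by (intro ennreal_leI) (simp add: exp_add)
  finally show ?thesis .
qed

locale subgaussian_gibbs = D: prob_space D for D :: "'b measure" +
  fixes \<pi> :: "'h measure" and H :: "'h \<Rightarrow> 'b \<Rightarrow> real" and \<sigma> :: real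
  assumes H_measurable[measurable]: "(\<lambda>(h, x). H h x) \<in> borel_measurable (\<pi> \<Otimes>\<^sub>M D)"
    and subgaussian_H: "\<And>h. h \<in> space \<pi> \<Longrightarrow> subgaussian D (H h) \<sigma>"
    and integrable_exp_H: "\<And>x. x \<in> space D \<Longrightarrow> integrable \<pi> (\<lambda>h. exp (H h x))"
    and partZ_pos: "\<And>x. x \<in> space D \<Longrightarrow> partZ \<pi> H x > 0"
    and integrable_exp_mean: "integrable \<pi> (\<lambda>h. exp (\<integral>x. H h x \<partial>D))"
    and integral_exp_mean_pos: "(\<integral>h. exp (\<integral>x. H h x \<partial>D) \<partial>\<pi>) > 0"
    and integrable_ln_partZ: "integrable D (\<lambda>x. ln (partZ \<pi> H x))"
begin

definition mean_H :: "'h \<Rightarrow> real" where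
  "mean_H h = (\<integral>x. H h x \<partial>D)"

definition partZ_mean :: real where
  "partZ_mean = (\<integral>h. exp (mean_H h) \<partial>\<pi>)"

lemma partZ_mean_pos: "partZ_mean > 0"
  using integral_exp_mean_pos by (simp add: partZ_mean_def mean_H_def)

sublocale \<pi>: sigma_finite_measure \<pi>
proof -
  obtain x where "x \<in> space D" using D.not_empty by blast
  then show "sigma_finite_measure \<pi>"
    by (intro sigma_finite_measure_if_integrable_pos[OF integrable_exp_H]) auto
qed

sublocale pair_sigma_finite \<pi> D by unfold_locales

lemma measurable_mean_H[measurable]: "mean_H \<in> borel_measurable \<pi>"
  unfolding mean_H_def[abs_def] by (rule D.borel_measurable_lebesgue_integral) simp

lemma measurable_partZ[measurable]: "partZ \<pi> H \<in> borel_measurable D"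
proof -
  have "(\<lambda>x. exp (ln (partZ \<pi> H x))) \<in> borel_measurable D"
    using borel_measurable_integrable[OF integrable_ln_partZ] by measurable
  then show ?thesis by (rule measurable_cong[THEN iffD1, rotated]) (use partZ_pos in auto)
qed

lemma nn_integral_partZ_eq:
  "x \<in> space D \<Longrightarrow> (\<integral>\<^sup>+h. ennreal (exp (H h x)) \<partial>\<pi>) = ennreal (partZ \<pi> H x)"
  unfolding partZ_def by (rule nn_integral_eq_integral) (use integrable_exp_H in auto)

lemma nn_integral_tilted_exp_le:
  "(\<integral>\<^sup>+x. \<integral>\<^sup>+h. ennreal (exp (mean_H h + l * (H h x - mean_H h))) \<partial>\<pi> \<partial>D)
     \<le> ennreal (exp (l\<^sup>2 * \<sigma>\<^sup>2 / 2) * partZ_mean)"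
proof -
  have "(\<integral>\<^sup>+x. \<integral>\<^sup>+h. ennreal (exp (mean_H h + l * (H h x - mean_H h))) \<partial>\<pi> \<partial>D)
      = (\<integral>\<^sup>+h. \<integral>\<^sup>+x. ennreal (exp (mean_H h + l * (H h x - mean_H h))) \<partial>D \<partial>\<pi>)"
    using Fubini[where f="\<lambda>(h, x). ennreal (exp (mean_H h + l * (H h x - mean_H h)))"] by simp
  also have "\<dots> \<le> (\<integral>\<^sup>+h. ennreal (exp (mean_H h + l\<^sup>2 * \<sigma>\<^sup>2 / 2)) \<partial>\<pi>)"
    using subgaussian_nn_integral_exp_le[OF subgaussian_H]
    by (intro nn_integral_mono) (simp add: mean_H_def)
  also have "\<dots> = ennreal (\<integral>h. exp (l\<^sup>2 * \<sigma>\<^sup>2 / 2) * exp (mean_H h) \<partial>\<pi>)"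
    using integrable_exp_mean
    by (subst nn_integral_eq_integral) (auto simp: mean_H_def exp_add mult.commute)
  also have "\<dots> = ennreal (exp (l\<^sup>2 * \<sigma>\<^sup>2 / 2) * partZ_mean)"
    by (simp add: partZ_mean_def)
  finally show ?thesis .
qed

lemma nn_integral_partZ_le: "(\<integral>\<^sup>+x. ennreal (partZ \<pi> H x) \<partial>D) \<le> ennreal (exp (\<sigma>\<^sup>2 / 2) * partZ_mean)"
  using nn_integral_tilted_exp_le[of 1]
  by (simp add: nn_integral_partZ_eq[symmetric] cong: nn_integral_cong)

lemma integrable_partZ: "integrable D (partZ \<pi> H)"
proof (rule integrableI_nonneg)
  show "AE x in D. 0 \<le> partZ \<pi> H x" using partZ_pos by (auto intro!: AE_I2 less_imp_le)
  show "(\<integral>\<^sup>+x. ennreal (partZ \<pi> H x) \<partial>D) < \<infinity>"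
    using nn_integral_partZ_le by (rule le_less_trans) simp
qed simp

lemma integral_ln_partZ_le: "(\<integral>x. ln (partZ \<pi> H x) \<partial>D) \<le> ln partZ_mean + \<sigma>\<^sup>2 / 2"
proof -
  have pos: "(\<integral>x. partZ \<pi> H x \<partial>D) > 0"
    using integrable_partZ partZ_pos by (intro D.expectation_greater) auto
  have "- ln (\<integral>x. partZ \<pi> H x \<partial>D) \<le> (\<integral>x. - ln (partZ \<pi> H x) \<partial>D)"
    using integrable_partZ integrable_ln_partZ partZ_pos ln_concave
    by (intro D.jensens_inequality[where I="{0<..}"]) (auto simp: concave_on_def)
  then have "(\<integral>x. ln (partZ \<pi> H x) \<partial>D) \<le> ln (\<integral>x. partZ \<pi> H x \<partial>D)" by simp
  also have "\<dots> \<le> ln (exp (\<sigma>\<^sup>2 / 2) * partZ_mean)"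
    using nn_integral_partZ_le integrable_partZ partZ_pos partZ_mean_pos pos
    by (subst (asm) nn_integral_eq_integral) (auto intro: less_imp_le)
  also have "\<dots> = ln partZ_mean + \<sigma>\<^sup>2 / 2" using partZ_mean_pos by (simp add: ln_mult)
  finally show ?thesis .
qed

lemma partZ_ratio_neg_power_le:
  assumes x: "x \<in> space D" and s: "s \<ge> 0"
  shows "ennreal (partZ_mean * exp (- s * ln (partZ \<pi> H x / partZ_mean)))
     \<le> (\<integral>\<^sup>+h. ennreal (exp (mean_H h + (- s) * (H h x - mean_H h))) \<partial>\<pi>)"
    (is "_ \<le> ?N")
proof -
  have [measurable]: "(\<lambda>h. H h x) \<in> borel_measurable \<pi>"
    using measurable_comp[OF measurable_Pair2'[OF x] H_measurable] by (simp add: o_def)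
  define c where "c = ln (partZ \<pi> H x / partZ_mean)"
  have Zx: "partZ \<pi> H x > 0" using partZ_pos[OF x] .
  have exp_neg_c: "exp (- c) * partZ \<pi> H x = partZ_mean"
    using Zx partZ_mean_pos by (simp add: c_def exp_minus)
  \<comment> \<open>The tangent line of \<open>y \<mapsto> y\<^sup>-\<^sup>s\<close> at \<open>y = 1\<close>, taken at \<open>y = exp (H h x - mean_H h - c)\<close>;
    integrating it against \<open>exp (mean_H h) d\<pi>(h)\<close> is the Jensen step.\<close>
  have tangent: "(1 + s) * exp (mean_H h)
      \<le> exp (s * c) * exp (mean_H h + (- s) * (H h x - mean_H h)) + s * exp (- c) * exp (H h x)" for h
  proof -
    have "exp (mean_H h) * (1 + s - s * exp (H h x - mean_H h - c))
        \<le> exp (mean_H h) * exp (- s * (H h x - mean_H h - c))"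
      using exp_neg_mult_ge_tangent[OF s] by (intro mult_left_mono) auto
    then show ?thesis by (simp add: algebra_simps flip: exp_add exp_diff)
  qed
  have "ennreal ((1 + s) * partZ_mean) = (\<integral>\<^sup>+h. ennreal ((1 + s) * exp (mean_H h)) \<partial>\<pi>)"
    using integrable_exp_mean s
    by (subst nn_integral_eq_integral) (auto simp: partZ_mean_def mean_H_def)
  also have "\<dots> \<le> (\<integral>\<^sup>+h. ennreal (exp (s * c)) * ennreal (exp (mean_H h + (- s) * (H h x - mean_H h)))
                      + ennreal (s * exp (- c)) * ennreal (exp (H h x)) \<partial>\<pi>)"
    using tangent s by (intro nn_integral_mono) (simp flip: ennreal_plus ennreal_mult)
  also have "\<dots> = ennreal (exp (s * c)) * ?N + ennreal (s * exp (- c)) * ennreal (partZ \<pi> H x)"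
    by (simp add: nn_integral_add nn_integral_cmult nn_integral_partZ_eq[OF x])
  also have "\<dots> = ennreal (exp (s * c)) * ?N + ennreal (s * partZ_mean)"
    using s Zx by (simp add: mult.assoc exp_neg_c flip: ennreal_mult)
  finally have "ennreal partZ_mean + ennreal (s * partZ_mean)
      \<le> ennreal (exp (s * c)) * ?N + ennreal (s * partZ_mean)"
    using s partZ_mean_pos by (simp add: distrib_right flip: ennreal_plus)
  then have "ennreal partZ_mean \<le> ennreal (exp (s * c)) * ?N"
    by (simp add: add.commute)
  then have "ennreal (exp (- s * c)) * ennreal partZ_mean
      \<le> ennreal (exp (- s * c)) * ennreal (exp (s * c)) * ?N"
    by (simp add: mult.assoc mult_left_mono)
  then show ?thesis
    using partZ_mean_pos by (simp add: c_def mult.commute flip: ennreal_mult exp_add)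
qed

lemma nn_integral_exp_neg_ln_partZ_le:
  assumes s: "s \<ge> 0"
  shows "(\<integral>\<^sup>+x. ennreal (exp (s * (- ln (partZ \<pi> H x) + (\<integral>x'. ln (partZ \<pi> H x') \<partial>D)))) \<partial>D)
     \<le> ennreal (exp (s * \<sigma>\<^sup>2 / 2 + s\<^sup>2 * \<sigma>\<^sup>2 / 2))"
proof -
  define c0 where "c0 = (\<integral>x'. ln (partZ \<pi> H x') \<partial>D)"
  define K where "K = exp (s * (c0 - ln partZ_mean)) / partZ_mean"
  have K: "K \<ge> 0" using partZ_mean_pos by (simp add: K_def)
  have "(\<integral>\<^sup>+x. ennreal (exp (s * (- ln (partZ \<pi> H x) + c0))) \<partial>D)
      = (\<integral>\<^sup>+x. ennreal K * ennreal (partZ_mean * exp (- s * ln (partZ \<pi> H x / partZ_mean))) \<partial>D)"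
  proof (intro nn_integral_cong)
    fix x assume "x \<in> space D"
    then have "partZ \<pi> H x > 0" by (rule partZ_pos)
    then show "ennreal (exp (s * (- ln (partZ \<pi> H x) + c0)))
        = ennreal K * ennreal (partZ_mean * exp (- s * ln (partZ \<pi> H x / partZ_mean)))"
      using K partZ_mean_pos by (simp add: K_def ln_div algebra_simps flip: ennreal_mult exp_add)
  qed
  also have "\<dots> \<le> (\<integral>\<^sup>+x. ennreal K *
      (\<integral>\<^sup>+h. ennreal (exp (mean_H h + (- s) * (H h x - mean_H h))) \<partial>\<pi>) \<partial>D)"
    using partZ_ratio_neg_power_le s by (intro nn_integral_mono mult_left_mono) simp_all
  also have "\<dots> = ennreal K *
      (\<integral>\<^sup>+x. \<integral>\<^sup>+h. ennreal (exp (mean_H h + (- s) * (H h x - mean_H h))) \<partial>\<pi> \<partial>D)"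
    by (rule nn_integral_cmult) measurable
  also have "\<dots> \<le> ennreal K * ennreal (exp ((- s)\<^sup>2 * \<sigma>\<^sup>2 / 2) * partZ_mean)"
    by (intro mult_left_mono nn_integral_tilted_exp_le) simp
  also have "\<dots> = ennreal (exp (s * (c0 - ln partZ_mean) + s\<^sup>2 * \<sigma>\<^sup>2 / 2))"
    using partZ_mean_pos K by (simp add: K_def exp_add flip: ennreal_mult)
  also have "\<dots> \<le> ennreal (exp (s * \<sigma>\<^sup>2 / 2 + s\<^sup>2 * \<sigma>\<^sup>2 / 2))"
  proof -
    have "s * (c0 - ln partZ_mean) \<le> s * (\<sigma>\<^sup>2 / 2)"
      using integral_ln_partZ_le s unfolding c0_def by (intro mult_left_mono) auto
    then show ?thesis by (intro ennreal_leI) simp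
  qed
  finally show ?thesis unfolding c0_def .
qed

lemma nn_integral_exp_f_neg_ln_partZ_le:
  fixes f :: "'b \<Rightarrow> real"
  assumes p: "p \<ge> 0" and \<rho>: "\<rho> > 0" and \<sigma>: "\<sigma> > 0" and f: "subgaussian D f \<rho>"
  shows "(\<integral>\<^sup>+x. ennreal (exp (p * (f x - (\<integral>x'. f x' \<partial>D) - ln (partZ \<pi> H x)
              + (\<integral>x'. ln (partZ \<pi> H x') \<partial>D)))) \<partial>D)
     \<le> ennreal (exp (p\<^sup>2 * (\<rho> + \<sigma>)\<^sup>2 / 2 + p * \<sigma>\<^sup>2 / 2))"
proof -
  define Ef where "Ef = (\<integral>x'. f x' \<partial>D)"
  define c0 where "c0 = (\<integral>x'. ln (partZ \<pi> H x') \<partial>D)"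
  define t where "t = \<rho> / (\<rho> + \<sigma>)"
  define l where "l = p / t"
  define s where "s = p / (1 - t)"
  have t: "0 < t" "t < 1" using \<rho> \<sigma> by (auto simp: t_def)
  have s: "s \<ge> 0" using p t by (simp add: s_def)
  have [measurable]: "f \<in> borel_measurable D" using f by (auto simp: subgaussian_def)
  have F: "(\<integral>\<^sup>+x. ennreal (exp (p * (f x - Ef) / t)) \<partial>D) \<le> ennreal (exp (l\<^sup>2 * \<rho>\<^sup>2 / 2))"
    using subgaussian_nn_integral_exp_le[OF f, of 0 l] by (simp add: l_def Ef_def)
  have G: "(\<integral>\<^sup>+x. ennreal (exp (p * (- ln (partZ \<pi> H x) + c0) / (1 - t))) \<partial>D)
      \<le> ennreal (exp (s * \<sigma>\<^sup>2 / 2 + s\<^sup>2 * \<sigma>\<^sup>2 / 2))"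
    using nn_integral_exp_neg_ln_partZ_le[OF s] by (simp add: s_def c0_def)
  have "t * (l\<^sup>2 * \<rho>\<^sup>2 / 2) + (1 - t) * (s * \<sigma>\<^sup>2 / 2 + s\<^sup>2 * \<sigma>\<^sup>2 / 2)
      = p\<^sup>2 * (\<rho> + \<sigma>)\<^sup>2 / 2 + p * \<sigma>\<^sup>2 / 2"
  proof -
    have tl: "t * l = p" and ts: "(1 - t) * s = p" using t by (simp_all add: l_def s_def)
    have "1 - t = \<sigma> / (\<rho> + \<sigma>)" using \<rho> \<sigma> by (simp add: t_def field_simps)
    then have l\<rho>: "l * \<rho> = p * (\<rho> + \<sigma>)" and s\<sigma>: "s * \<sigma> = p * (\<rho> + \<sigma>)"
      using \<rho> \<sigma> by (simp_all add: l_def s_def t_def)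
    have "t * (l\<^sup>2 * \<rho>\<^sup>2 / 2) + (1 - t) * (s * \<sigma>\<^sup>2 / 2 + s\<^sup>2 * \<sigma>\<^sup>2 / 2)
        = (t * l) * (l * \<rho>) * \<rho> / 2 + ((1 - t) * s) * \<sigma>\<^sup>2 / 2 + ((1 - t) * s) * (s * \<sigma>) * \<sigma> / 2"
      by (simp add: power2_eq_square algebra_simps)
    then show ?thesis unfolding tl ts l\<rho> s\<sigma> by (simp add: power2_eq_square field_simps)
  qed
  moreover have "p * (f x - Ef - ln (partZ \<pi> H x) + c0) = p * (f x - Ef) + p * (- ln (partZ \<pi> H x) + c0)"
    for x by (simp add: algebra_simps)
  ultimately show ?thesis
    using nn_integral_exp_add_le_Hoelder[OF _ _ t F G] by (simp add: Ef_def c0_def)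
qed

lemma ln_integral_exp_neg_ln_partZ_le:
  assumes p: "p \<ge> 1"
    and int: "integrable D (\<lambda>x. exp (p * (- ln (partZ \<pi> H x) + (\<integral>x'. ln (partZ \<pi> H x') \<partial>D))))"
  shows "ln (\<integral>x. exp (p * (- ln (partZ \<pi> H x) + (\<integral>x'. ln (partZ \<pi> H x') \<partial>D))) \<partial>D) \<le> p\<^sup>2 * \<sigma>\<^sup>2"
proof (rule ln_integral_le_of_nn_integral_le[OF int])
  have "p * \<sigma>\<^sup>2 \<le> p\<^sup>2 * \<sigma>\<^sup>2" using p by (intro mult_right_mono) (auto simp: power2_eq_square)
  then show "(\<integral>\<^sup>+x. ennreal (exp (p * (- ln (partZ \<pi> H x) + (\<integral>x'. ln (partZ \<pi> H x') \<partial>D)))) \<partial>D)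
      \<le> ennreal (exp (p\<^sup>2 * \<sigma>\<^sup>2))"
    using nn_integral_exp_neg_ln_partZ_le[of p] p by (auto intro: order_trans ennreal_leI)
qed auto

lemma ln_integral_exp_f_neg_ln_partZ_le:
  fixes f :: "'b \<Rightarrow> real"
  assumes p: "p \<ge> 1" and \<rho>: "\<rho> \<ge> 0" and \<sigma>: "\<sigma> > 0" and f: "subgaussian D f \<rho>"
    and int: "integrable D (\<lambda>x. exp (p * (f x - (\<integral>x'. f x' \<partial>D) - ln (partZ \<pi> H x)
                + (\<integral>x'. ln (partZ \<pi> H x') \<partial>D))))"
  shows "ln (\<integral>x. exp (p * (f x - (\<integral>x'. f x' \<partial>D) - ln (partZ \<pi> H x)
                + (\<integral>x'. ln (partZ \<pi> H x') \<partial>D))) \<partial>D) \<le> p\<^sup>2 * (\<rho> + \<sigma>)\<^sup>2"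
    (is "?L \<le> _")
proof -
  have bound: "?L \<le> p\<^sup>2 * (e + \<sigma>)\<^sup>2" if e: "e > \<rho>" for e
  proof (rule ln_integral_le_of_nn_integral_le[OF int])
    have "p * \<sigma>\<^sup>2 \<le> p\<^sup>2 * (e + \<sigma>)\<^sup>2"
      using p \<rho> \<sigma> e by (intro mult_mono power_mono) (auto simp: power2_eq_square)
    moreover have "subgaussian D f e" using \<rho> e by (intro subgaussian_mono[OF f]) auto
    ultimately show "(\<integral>\<^sup>+x. ennreal (exp (p * (f x - (\<integral>x'. f x' \<partial>D) - ln (partZ \<pi> H x)
                + (\<integral>x'. ln (partZ \<pi> H x') \<partial>D)))) \<partial>D) \<le> ennreal (exp (p\<^sup>2 * (e + \<sigma>)\<^sup>2))"
      using nn_integral_exp_f_neg_ln_partZ_le[of p e f] p \<rho> \<sigma> e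
      by (auto intro: order_trans ennreal_leI)
  qed auto
  show ?thesis
  proof (rule tendsto_le[OF trivial_limit_at_right_real])
    show "((\<lambda>e. p\<^sup>2 * (e + \<sigma>)\<^sup>2) \<longlongrightarrow> p\<^sup>2 * (\<rho> + \<sigma>)\<^sup>2) (at_right \<rho>)"
      by (intro tendsto_intros)
    show "\<forall>\<^sub>F e in at_right \<rho>. ?L \<le> p\<^sup>2 * (e + \<sigma>)\<^sup>2"
      using eventually_at_right_less by (rule eventually_mono) (rule bound)
  qed simp
qed

end

theorem mainTheorem9:
  fixes \<mu> :: "'x measure" and n :: nat and \<pi> :: "'h measure"
    and H :: "'h \<Rightarrow> (nat \<Rightarrow> 'x) \<Rightarrow> real" and p \<sigma> :: real
  defines "D \<equiv> prod_sample n \<mu>"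
  defines "Z \<equiv> partZ \<pi> H"
  assumes prob: "prob_space \<mu>"
    and p: "p \<ge> 1" and sigma: "\<sigma> > 0"
    and H_meas: "(\<lambda>(h, x). H h x) \<in> borel_measurable (\<pi> \<Otimes>\<^sub>M D)"
    and H_subg: "\<And>h. h \<in> space \<pi> \<Longrightarrow> subgaussian D (H h) \<sigma>"
    and Z_fin: "\<And>x. x \<in> space D \<Longrightarrow> integrable \<pi> (\<lambda>h. exp (H h x))"
    and Z_pos: "\<And>x. x \<in> space D \<Longrightarrow> Z x > 0"
    and EH_fin: "integrable \<pi> (\<lambda>h. exp (\<integral>x. H h x \<partial>D))"
    and EH_pos: "(\<integral>h. exp (\<integral>x. H h x \<partial>D) \<partial>\<pi>) > 0"
    and lnZ_int: "integrable D (\<lambda>x. ln (Z x))"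
    and i_int: "integrable D (\<lambda>x. exp (p * (- ln (Z x) + (\<integral>x'. ln (Z x') \<partial>D))))"
  shows "ln (\<integral>x. exp (p * (- ln (Z x) + (\<integral>x'. ln (Z x') \<partial>D))) \<partial>D) \<le> p\<^sup>2 * \<sigma>\<^sup>2
     \<and> (\<forall>(f :: (nat \<Rightarrow> 'x) \<Rightarrow> real) (\<rho> :: real).
          \<rho> \<ge> 0 \<and> subgaussian D f \<rho> \<and>
          integrable D (\<lambda>x. exp (p * (f x - (\<integral>x'. f x' \<partial>D) - ln (Z x) + (\<integral>x'. ln (Z x') \<partial>D))))
          \<longrightarrow> ln (\<integral>x. exp (p * (f x - (\<integral>x'. f x' \<partial>D) - ln (Z x) + (\<integral>x'. ln (Z x') \<partial>D))) \<partial>D)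
                \<le> p\<^sup>2 * (\<rho> + \<sigma>)\<^sup>2)"
proof -
  have "prob_space D" unfolding D_def using prob by (rule prob_space_PiM)
  then interpret subgaussian_gibbs D \<pi> H \<sigma>
    by (rule subgaussian_gibbs.intro[OF _ subgaussian_gibbs_axioms.intro[OF H_meas H_subg Z_fin
          Z_pos[unfolded Z_def] EH_fin EH_pos lnZ_int[unfolded Z_def]]])
  show ?thesis
    using ln_integral_exp_neg_ln_partZ_le[OF p] ln_integral_exp_f_neg_ln_partZ_le[OF p _ sigma]
      i_int unfolding Z_def by blast
qed

end
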